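(* For nonnegative integers $s_1,s_2$, let $N(s_1,s_2)$ be the number of $(x_1,x_2,x_3,x_4)\in\mathbb Z_{\ge0}^4$ with $x_1+2x_2+x_3=s_1$ and $x_1+x_2+x_4=s_2$ (the vector partition function of $\begin{pmatrix}1&2&1&0\\1&1&0&1\end{pmatrix}$). For $\boldsymbol\alpha=(\alpha_1,\alpha_2)\in\mathbb C^2$ with $(\alpha_1+\alpha_2)(2\alpha_1+\alpha_2)\ne0$ define $$W(\mathbf s;\boldsymbol\alpha)=\frac{\alpha_1^2\,A+2\alpha_1\alpha_2\,B+\alpha_2^2\,C}{2(\alpha_1+\alpha_2)(2\alpha_1+\alpha_2)},$$ where $A=s_1^2+4s_1+\tfrac72+\tfrac12(-1)^{s_1}$, $B=s_1s_2+\tfrac32s_1+2s_2+\tfrac{11}4+\tfrac14(-1)^{s_1}$, $C=s_2^2+3s_2+2$. Then: (i) if $s_1\le s_2$, $N(s_1,s_2)=W(\mathbf s;(1,0))=\frac{s_1^2}{4}+s_1+\frac{7+(-1)^{s_1}}{8}$; (ii) if $s_1/2-1\le s_2\le s_1+1$, $N(s_1,s_2)=\operatorname{Re}W(\mathbf s;(1,-1\pm i))=s_1s_2-\frac{s_1^2+2s_2^2}{4}+\frac{s_1+s_2}{2}+\frac{7+(-1)^{s_1}}{8}$; (iii) if $s_2\le s_1/2$, $N(s_1,s_2)=W(\mathbf s;(0,1))=\frac{s_2^2}{2}+\frac{3s_2}{2}+1$. *)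

theory Defs
  imports Complex_Main
begin

definition N :: "nat \<Rightarrow> nat \<Rightarrow> nat" where
  "N s1 s2 = card {(x1::nat, x2::nat, x3::nat, x4::nat).
                     x1 + 2 * x2 + x3 = s1 \<and> x1 + x2 + x4 = s2}"

definition WA :: "nat \<Rightarrow> complex" where
  "WA s1 = of_nat s1 ^ 2 + 4 * of_nat s1 + 7/2 + (1/2) * (-1) ^ s1"

definition WB :: "nat \<Rightarrow> nat \<Rightarrow> complex" where
  "WB s1 s2 = of_nat s1 * of_nat s2 + (3/2) * of_nat s1 + 2 * of_nat s2 + 11/4 + (1/4) * (-1) ^ s1"

definition WC :: "nat \<Rightarrow> complex" where
  "WC s2 = of_nat s2 ^ 2 + 3 * of_nat s2 + 2"

definition W :: "nat \<Rightarrow> nat \<Rightarrow> complex \<Rightarrow> complex \<Rightarrow> complex" where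
  "W s1 s2 a1 a2 = (a1^2 * WA s1 + 2 * a1 * a2 * WB s1 s2 + a2^2 * WC s2)
                    / (2 * (a1 + a2) * (2 * a1 + a2))"

end

theory Submission
  imports Defs
begin

(* Since x3 and x4 are slack variables, N s1 s2 counts the lattice points (x1, x2) of the polygon
   x1 + 2 x2 \<le> s1, x1 + x2 \<le> s2.  Its bottom row x2 = 0 has min s1 s2 + 1 points, and the rest is
   a translate of the polygon for (s1 - 2, s2 - 1); hence
     N (s1 + 2) (s2 + 1) = min (s1 + 2) (s2 + 1) + 1 + N s1 s2.
   Stepping back by (2, 1) keeps a point in its region, on which the minimum is a fixed
   coordinate; the one exception is the edge s2 = s1 + 1 of region (ii), which lies in region (i).
   So each quasi-polynomial follows by induction on s2 from the values N 0 s2, N 1 s2 and N s1 0.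
   The coefficients A, B, C of W are real, so W commutes with complex conjugation and the
   value at (1, -1 - i) is the conjugate of the one at (1, -1 + i). *)

definition polygon_points :: "nat \<Rightarrow> nat \<Rightarrow> (nat \<times> nat) set" where
  "polygon_points s1 s2 = {(a, b). a + 2 * b \<le> s1 \<and> a + b \<le> s2}"

lemma finite_polygon_points: "finite (polygon_points s1 s2)"
  by (rule finite_subset[of _ "{0..s1} \<times> {0..s1}"]) (auto simp: polygon_points_def)

lemma N_eq_card_polygon_points: "N s1 s2 = card (polygon_points s1 s2)"
proof -
  have "{(x1, x2, x3, x4). x1 + 2 * x2 + x3 = s1 \<and> x1 + x2 + x4 = s2}
      = (\<lambda>(a, b). (a, b, s1 - a - 2 * b, s2 - a - b)) ` polygon_points s1 s2"
    by (auto simp: polygon_points_def image_iff)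
  moreover have "inj_on (\<lambda>(a, b). (a, b, s1 - a - 2 * b, s2 - a - b)) (polygon_points s1 s2)"
    by (auto simp: inj_on_def)
  ultimately show ?thesis
    unfolding N_def by (simp add: card_image)
qed

lemma N_add_2_1: "N (s1 + 2) (s2 + 1) = min (s1 + 2) (s2 + 1) + 1 + N s1 s2"
proof -
  let ?P = "polygon_points (s1 + 2) (s2 + 1)"
  let ?row = "(\<lambda>a. (a, 0 :: nat)) ` {0..min (s1 + 2) (s2 + 1)}"
  let ?shift = "(\<lambda>(a, b). (a, Suc b)) ` polygon_points s1 s2"
  have split: "?P = ?row \<union> ?shift"
  proof (rule set_eqI, clarify)
    fix a b
    show "(a, b) \<in> ?P \<longleftrightarrow> (a, b) \<in> ?row \<union> ?shift"
      by (cases b) (auto simp: polygon_points_def image_iff)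
  qed
  have "card ?P = card ?row + card ?shift"
    unfolding split by (rule card_Un_disjoint) (auto simp: finite_polygon_points)
  also have "card ?row = min (s1 + 2) (s2 + 1) + 1"
    by (simp add: card_image inj_on_def)
  also have "card ?shift = card (polygon_points s1 s2)"
    by (rule card_image) (auto simp: inj_on_def)
  finally show ?thesis
    by (simp add: N_eq_card_polygon_points)
qed

lemma N_0_left: "N 0 s2 = 1"
proof -
  have "polygon_points 0 s2 = {(0, 0)}"
    by (auto simp: polygon_points_def)
  then show ?thesis
    by (simp add: N_eq_card_polygon_points)
qed

lemma N_1_left: "0 < s2 \<Longrightarrow> N 1 s2 = 2"
proof -
  assume "0 < s2"
  then have "polygon_points 1 s2 = {(0, 0), (1, 0)}"
    by (auto simp: polygon_points_def)
  then show ?thesis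
    by (simp add: N_eq_card_polygon_points)
qed

lemma N_0_right: "N s1 0 = 1"
proof -
  have "polygon_points s1 0 = {(0, 0)}"
    by (auto simp: polygon_points_def)
  then show ?thesis
    by (simp add: N_eq_card_polygon_points)
qed

lemma N_if_le:
  "s1 \<le> s2 \<Longrightarrow> real (N s1 s2) = real s1 ^ 2 / 4 + real s1 + (7 + (-1) ^ s1) / 8"
proof (induction s2 arbitrary: s1)
  case 0
  then show ?case by (simp add: N_0_right)
next
  case (Suc s2)
  show ?case
  proof (cases "s1 < 2")
    case True
    then consider "s1 = 0" | "s1 = 1" by linarith
    then show ?thesis
      by cases (use N_0_left N_1_left[of "Suc s2"] in simp_all)
  next
    case False
    then obtain s1' where s1: "s1 = s1' + 2"
      by (intro that[of "s1 - 2"]) simp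
    have "real (N s1 (Suc s2)) = real s1' + 3 + real (N s1' s2)"
      using N_add_2_1[of s1' s2] Suc.prems by (simp add: s1)
    also have "real (N s1' s2) = real s1' ^ 2 / 4 + real s1' + (7 + (-1) ^ s1') / 8"
      using Suc.IH Suc.prems s1 by simp
    finally show ?thesis
      by (simp add: s1 power2_eq_square field_simps)
  qed
qed

lemma N_if_2_mult_le:
  "2 * s2 \<le> s1 \<Longrightarrow> real (N s1 s2) = real s2 ^ 2 / 2 + 3 * real s2 / 2 + 1"
proof (induction s2 arbitrary: s1)
  case 0
  then show ?case by (simp add: N_0_right)
next
  case (Suc s2)
  then obtain s1' where s1: "s1 = s1' + 2" and le: "2 * s2 \<le> s1'"
    by (intro that[of "s1 - 2"]) simp_all
  have "real (N s1 (Suc s2)) = real s2 + 2 + real (N s1' s2)"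
    using N_add_2_1[of s1' s2] le by (simp add: s1)
  also have "real (N s1' s2) = real s2 ^ 2 / 2 + 3 * real s2 / 2 + 1"
    using Suc.IH le by simp
  finally show ?case
    by (simp add: power2_eq_square field_simps)
qed

lemma N_if_between:
  assumes "s1 \<le> 2 * s2 + 2" and "s2 \<le> s1 + 1"
  shows "real (N s1 s2) = real s1 * real s2 - (real s1 ^ 2 + 2 * real s2 ^ 2) / 4
           + (real s1 + real s2) / 2 + (7 + (-1) ^ s1) / 8"
  using assms
proof (induction s2 arbitrary: s1)
  case 0
  then consider "s1 = 0" | "s1 = 1" | "s1 = 2" by linarith
  then show ?case by cases (simp_all add: N_0_right)
next
  case (Suc s2)
  consider "Suc s2 = s1 + 1" | "s1 = 1" "s2 = 0" | s1' where "s1 = s1' + 2" "s2 \<le> s1' + 1"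
  proof (cases "Suc s2 = s1 + 1 \<or> s1 < 2")
    case True
    with Suc.prems consider "Suc s2 = s1 + 1" | "s1 = 1" "s2 = 0"
      by linarith
    then show ?thesis
      using that(1,2) by cases
  next
    case False
    with Suc.prems show ?thesis
      by (intro that(3)[of "s1 - 2"]) arith+
  qed
  then show ?case
  proof cases
    case 1
    then show ?thesis
      using N_if_le[of s1 "Suc s2"] by (simp add: power2_eq_square field_simps)
  next
    case 2
    then show ?thesis
      using N_1_left[of 1] by simp
  next
    case (3 s1')
    with Suc.prems have le: "s1' \<le> 2 * s2 + 2" "s2 \<le> s1' + 1" "Suc s2 \<le> s1' + 2"
      by simp_all
    have "real (N s1 (Suc s2)) = real s2 + 2 + real (N s1' s2)"
      using N_add_2_1[of s1' s2] le by (simp add: 3)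
    also have "real (N s1' s2) = real s1' * real s2 - (real s1' ^ 2 + 2 * real s2 ^ 2) / 4
           + (real s1' + real s2) / 2 + (7 + (-1) ^ s1') / 8"
      using Suc.IH le by simp
    finally show ?thesis
      by (simp add: 3 power2_eq_square field_simps)
  qed
qed

lemma W_1_0: "W s1 s2 1 0 = of_nat s1 ^ 2 / 4 + of_nat s1 + (7 + (-1) ^ s1) / 8"
  by (simp add: W_def WA_def field_simps)

lemma W_0_1: "W s1 s2 0 1 = of_nat s2 ^ 2 / 2 + 3 * of_nat s2 / 2 + 1"
  by (simp add: W_def WC_def field_simps)

lemma W_cnj: "W s1 s2 (cnj a1) (cnj a2) = cnj (W s1 s2 a1 a2)"
proof -
  have "cnj (WA s1) = WA s1" "cnj (WB s1 s2) = WB s1 s2" "cnj (WC s2) = WC s2"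
    by (simp_all add: WA_def WB_def WC_def)
  then show ?thesis
    by (simp add: W_def)
qed

lemma Re_W_1_minus_1_plus_i:
  "Re (W s1 s2 1 (-1 + \<i>)) = real s1 * real s2 - (real s1 ^ 2 + 2 * real s2 ^ 2) / 4
           + (real s1 + real s2) / 2 + (7 + (-1) ^ s1) / 8"
  by (simp add: W_def WA_def WB_def WC_def Re_divide power2_eq_square field_simps)

lemma Re_W_1_minus_1_minus_i:
  "Re (W s1 s2 1 (-1 - \<i>)) = real s1 * real s2 - (real s1 ^ 2 + 2 * real s2 ^ 2) / 4
           + (real s1 + real s2) / 2 + (7 + (-1) ^ s1) / 8"
proof -
  have "cnj (-1 + \<i>) = -1 - \<i>"
    by (simp add: complex_eq_iff)
  from W_cnj[of s1 s2 1 "-1 + \<i>", unfolded complex_cnj_one this]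
  have "W s1 s2 1 (-1 - \<i>) = cnj (W s1 s2 1 (-1 + \<i>))" .
  then show ?thesis
    using Re_W_1_minus_1_plus_i[of s1 s2] by simp
qed

theorem mainTheorem6:
  fixes s1 s2 :: nat
  shows
   "(s1 \<le> s2 \<longrightarrow>
       complex_of_nat (N s1 s2) = W s1 s2 1 0 \<and>
       W s1 s2 1 0 = of_nat s1 ^ 2 / 4 + of_nat s1 + (7 + (-1) ^ s1) / 8)
  \<and> (real s1 / 2 - 1 \<le> real s2 \<and> s2 \<le> s1 + 1 \<longrightarrow>
       real (N s1 s2) = Re (W s1 s2 1 (-1 + \<i>)) \<and>
       real (N s1 s2) = Re (W s1 s2 1 (-1 - \<i>)) \<and>
       Re (W s1 s2 1 (-1 + \<i>)) = real s1 * real s2 - (real s1 ^ 2 + 2 * real s2 ^ 2) / 4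
           + (real s1 + real s2) / 2 + (7 + (-1) ^ s1) / 8 \<and>
       Re (W s1 s2 1 (-1 - \<i>)) = real s1 * real s2 - (real s1 ^ 2 + 2 * real s2 ^ 2) / 4
           + (real s1 + real s2) / 2 + (7 + (-1) ^ s1) / 8)
  \<and> (real s2 \<le> real s1 / 2 \<longrightarrow>
       complex_of_nat (N s1 s2) = W s1 s2 0 1 \<and>
       W s1 s2 0 1 = of_nat s2 ^ 2 / 2 + 3 * of_nat s2 / 2 + 1)"
proof (intro conjI impI)
  assume "s1 \<le> s2"
  then have "complex_of_real (real (N s1 s2)) = W s1 s2 1 0"
    by (simp add: N_if_le W_1_0)
  then show "complex_of_nat (N s1 s2) = W s1 s2 1 0" by simp
next
  assume "real s1 / 2 - 1 \<le> real s2 \<and> s2 \<le> s1 + 1"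
  then have "s1 \<le> 2 * s2 + 2" "s2 \<le> s1 + 1" by linarith+
  then show "real (N s1 s2) = Re (W s1 s2 1 (-1 + \<i>))"
    and "real (N s1 s2) = Re (W s1 s2 1 (-1 - \<i>))"
    unfolding Re_W_1_minus_1_plus_i Re_W_1_minus_1_minus_i by (rule N_if_between)+
next
  assume "real s2 \<le> real s1 / 2"
  then have "complex_of_real (real (N s1 s2)) = W s1 s2 0 1"
    by (simp add: N_if_2_mult_le W_0_1)
  then show "complex_of_nat (N s1 s2) = W s1 s2 0 1" by simp
qed (simp_all only: W_1_0 W_0_1 Re_W_1_minus_1_plus_i Re_W_1_minus_1_minus_i)

end
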